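(* Let $x_1,\dots,x_N\in\mathbb{R}^M$ and $y_1,\dots,y_N\in\mathbb{R}$, and let $X_N=[x_1\ \cdots\ x_N]^\top\in\mathbb{R}^{N\times M}$ and $Y_N=[y_1\ \cdots\ y_N]^\top\in\mathbb{R}^N$. Let $\theta_{MN}=X_N^+Y_N$ be the minimum-norm least-squares solution. Let $x\in\mathbb{R}^M$ be a test vector and $y\in\mathbb{R}$ a test label, and set $$\|x_\perp\|^2 := x^\top\left[I-X_N^+X_N\right]x,$$ assumed nonzero. Let $X_{N+1}=[x_1\ \cdots\ x_N\ x]^\top$, $Y_{N+1}=[y_1\ \cdots\ y_N\ y]^\top$, and let $\theta_{N+1}=X_{N+1}^+Y_{N+1}$ be the minimum-norm least-squares solution based on the $N+1$ samples. Then $$\|\theta_{N+1}\|^2=\|\theta_{MN}\|^2+\frac{1}{\|x_\perp\|^2}\left(y-x^\top\theta_{MN}\right)^2 .$$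
   Context: $\|\cdot\|$ is the Euclidean norm. For a data matrix $X$ with $N$ rows and $M$ columns, the pseudo-inverse is $X^+=(X^\top X)^{-1}X^\top$ if $\mathrm{rank}(X^\top X)=M$, and $X^+=X^\top(XX^\top)^{-1}$ otherwise (the Moore–Penrose pseudo-inverse in these full-rank cases). *)

theory Defs
  imports "Jordan_Normal_Form.Matrix"
begin

text \<open>For full column rank it equals (X^T X)^(-1) X^T and for
full row rank it equals X^T (X X^T)^(-1), as in the paper.\<close>
definition pinv :: "real mat \<Rightarrow> real mat" where
  "pinv A = (THE B. B \<in> carrier_mat (dim_col A) (dim_row A) \<and>
      A * B * A = A \<and> B * A * B = B \<and>
      transpose_mat (A * B) = A * B \<and> transpose_mat (B * A) = B * A)"

definition sqnorm :: "real vec \<Rightarrow> real" where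
  "sqnorm v = scalar_prod v v"

end

theory Submission
  imports Defs "Jordan_Normal_Form.Determinant"
begin

(* Write A for X_N, B = pinv A, theta = B Y_N, and p = x - B A x for the component of x
   orthogonal to the row space of A.  The vector c = theta + t p with t = (y - x.theta) / (x.p)
   lies in the row space of X_(N+1) and solves its normal equations, because A p = 0 and
   x.c = y; the pseudo-inverse solution is the unique such vector, so it equals c.  As theta
   is orthogonal to p and x.p = |p|^2, Pythagoras gives the formula.
   The pseudo-inverse itself exists because Gram-Schmidt yields an orthonormal basis U of the
   row space of A: then A = G U with G = A U^T injective, and U^T (G^T G)^-1 G^T satisfies
   the four Penrose conditions. *)

lemma assoc_mult_mat_dim:
  fixes A :: "'a::comm_semiring_0 mat"
  shows "dim_col A = dim_row B \<Longrightarrow> dim_col B = dim_row C \<Longrightarrow> A * B * C = A * (B * C)"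
  by (rule assoc_mult_mat[of A "dim_row A" "dim_col A" B "dim_col B" C "dim_col C"]) auto

lemma transpose_mult_dim:
  fixes A :: "'a::comm_semiring_0 mat"
  shows "dim_col A = dim_row B \<Longrightarrow> transpose_mat (A * B) = transpose_mat B * transpose_mat A"
  by (rule transpose_mult[of A "dim_row A" "dim_col A" B "dim_col B"]) auto

lemma assoc_mult_mat_vec_dim:
  fixes A :: "'a::comm_semiring_0 mat"
  shows "dim_col A = dim_row B \<Longrightarrow> dim_col B = dim_vec v \<Longrightarrow> (A * B) *\<^sub>v v = A *\<^sub>v (B *\<^sub>v v)"
  by (rule assoc_mult_mat_vec[of A "dim_row A" "dim_col A" B "dim_col B"]) auto

lemma scalar_prod_transpose_mult_vec:
  fixes A :: "'a::comm_semiring_0 mat"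
  assumes "A \<in> carrier_mat nr nc" "x \<in> carrier_vec nc" "y \<in> carrier_vec nr"
  shows "x \<bullet> (transpose_mat A *\<^sub>v y) = (A *\<^sub>v x) \<bullet> y"
  using assms transpose_vec_mult_scalar[OF assms] comm_scalar_prod[of x nc "transpose_mat A *\<^sub>v y"]
    comm_scalar_prod[of y nr "A *\<^sub>v x"] by simp

lemma scalar_prod_self_eq_0_iff:
  fixes v :: "real vec"
  assumes "v \<in> carrier_vec n"
  shows "v \<bullet> v = 0 \<longleftrightarrow> v = 0\<^sub>v n"
  using conjugate_square_eq_0_vec[OF assms] by simp

lemma vec_of_list_snoc: "vec_of_list (xs @ [a]) = vec_of_list xs @\<^sub>v vec_of_list [a]"
  by (intro eq_vecI) (auto simp: vec_of_list_index nth_append)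

lemma mat_of_rows_snoc_mult_vec:
  assumes "v \<in> carrier_vec m"
  shows "mat_of_rows m (ws @ [z]) *\<^sub>v v = (mat_of_rows m ws *\<^sub>v v) @\<^sub>v vec_of_list [z \<bullet> v]"
  using assms by (intro eq_vecI) (auto simp: nth_append scalar_prod_def mat_of_rows_index)

lemma transpose_mat_of_rows_snoc_mult_vec:
  fixes ws :: "'a::comm_semiring_0 vec list"
  assumes "set ws \<subseteq> carrier_vec m" "z \<in> carrier_vec m" "w \<in> carrier_vec (length ws)"
  shows "transpose_mat (mat_of_rows m (ws @ [z])) *\<^sub>v (w @\<^sub>v vec_of_list [\<tau>])
    = transpose_mat (mat_of_rows m ws) *\<^sub>v w + \<tau> \<cdot>\<^sub>v z"
proof (rule eq_vecI)
  fix j assume "j < dim_vec (transpose_mat (mat_of_rows m ws) *\<^sub>v w + \<tau> \<cdot>\<^sub>v z)"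
  with assms have j: "j < m" by simp
  with assms show "(transpose_mat (mat_of_rows m (ws @ [z])) *\<^sub>v (w @\<^sub>v vec_of_list [\<tau>])) $ j
    = (transpose_mat (mat_of_rows m ws) *\<^sub>v w + \<tau> \<cdot>\<^sub>v z) $ j"
    by (auto simp: scalar_prod_def mat_of_rows_index nth_append mult.commute intro!: sum.cong)
qed (use assms in simp)

lemma gram_mat_of_rows_snoc_mult_vec:
  fixes ws :: "'a::comm_semiring_0 vec list"
  assumes "set ws \<subseteq> carrier_vec m" "z \<in> carrier_vec m" "v \<in> carrier_vec m"
  shows "(transpose_mat (mat_of_rows m (ws @ [z])) * mat_of_rows m (ws @ [z])) *\<^sub>v v
    = (transpose_mat (mat_of_rows m ws) * mat_of_rows m ws) *\<^sub>v v + (z \<bullet> v) \<cdot>\<^sub>v z"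
proof -
  let ?A = "mat_of_rows m ws" and ?A' = "mat_of_rows m (ws @ [z])"
  have "(transpose_mat ?A' * ?A') *\<^sub>v v = transpose_mat ?A' *\<^sub>v ((?A *\<^sub>v v) @\<^sub>v vec_of_list [z \<bullet> v])"
    using assms(3) by (simp add: assoc_mult_mat_vec_dim mat_of_rows_snoc_mult_vec del: vec_of_list_Cons)
  also have "\<dots> = transpose_mat ?A *\<^sub>v (?A *\<^sub>v v) + (z \<bullet> v) \<cdot>\<^sub>v z"
    by (rule transpose_mat_of_rows_snoc_mult_vec) (use assms in \<open>auto intro: carrier_vecI\<close>)
  finally show ?thesis using assms(3) by (simp add: assoc_mult_mat_vec_dim)
qed

definition orth_projector :: "nat \<Rightarrow> real mat \<Rightarrow> bool" where
  "orth_projector n P \<longleftrightarrow> P \<in> carrier_mat n n \<and> transpose_mat P = P \<and> P * P = P"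

context
  fixes P :: "real mat" and n :: nat and x :: "real vec"
  assumes P: "orth_projector n P" and x: "x \<in> carrier_vec n"
begin

lemma orth_projector_residual: "P *\<^sub>v (x - P *\<^sub>v x) = 0\<^sub>v n"
proof -
  have carr: "P \<in> carrier_mat n n" and idem: "P * P = P" using P by (auto simp: orth_projector_def)
  have "P *\<^sub>v (x - P *\<^sub>v x) = P *\<^sub>v x - (P * P) *\<^sub>v x"
    using carr x by (simp add: mult_minus_distrib_mat_vec)
  then show ?thesis using idem carr x by simp
qed

lemma orth_projector_residual_mult:
  assumes Q: "Q \<in> carrier_mat k n" and QP: "Q * P = Q"
  shows "Q *\<^sub>v (x - P *\<^sub>v x) = 0\<^sub>v k"
proof -
  have carr: "P \<in> carrier_mat n n" using P by (simp add: orth_projector_def)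
  have "Q *\<^sub>v (x - P *\<^sub>v x) = Q *\<^sub>v (P *\<^sub>v (x - P *\<^sub>v x))"
    using QP Q carr x by (metis assoc_mult_mat_vec minus_carrier_vec mult_mat_vec_carrier)
  then show ?thesis using orth_projector_residual Q by auto
qed

lemma orth_projector_residual_orth:
  assumes v: "v \<in> carrier_vec n"
  shows "(P *\<^sub>v v) \<bullet> (x - P *\<^sub>v x) = 0"
proof -
  have carr: "P \<in> carrier_mat n n" and sym: "transpose_mat P = P" using P by (auto simp: orth_projector_def)
  have "(P *\<^sub>v v) \<bullet> (x - P *\<^sub>v x) = v \<bullet> (transpose_mat P *\<^sub>v (x - P *\<^sub>v x))"
    using scalar_prod_transpose_mult_vec[OF carr v, of "x - P *\<^sub>v x"] carr x by simp
  then show ?thesis using orth_projector_residual sym v by simp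
qed

lemma orth_projector_residual_scalar_prod:
  "x \<bullet> (x - P *\<^sub>v x) = (x - P *\<^sub>v x) \<bullet> (x - P *\<^sub>v x)"
proof -
  have carr: "P \<in> carrier_mat n n" using P by (simp add: orth_projector_def)
  have "(x - P *\<^sub>v x) \<bullet> (x - P *\<^sub>v x) = x \<bullet> (x - P *\<^sub>v x) - (P *\<^sub>v x) \<bullet> (x - P *\<^sub>v x)"
    using carr x by (intro minus_scalar_prod_distrib[of _ n]) auto
  then show ?thesis using orth_projector_residual_orth[OF x] by simp
qed

end

definition orthonormal :: "real vec list \<Rightarrow> bool" where
  "orthonormal us \<longleftrightarrow> (\<forall>i<length us. \<forall>j<length us. us ! i \<bullet> us ! j = (if i = j then 1 else 0))"

lemma orthonormal_mult_transpose:
  assumes "set us \<subseteq> carrier_vec m" "orthonormal us"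
  shows "mat_of_rows m us * transpose_mat (mat_of_rows m us) = 1\<^sub>m (length us)"
  using assms by (intro eq_matI) (auto simp: orthonormal_def subsetD)

lemma orthonormal_orth_projector:
  assumes "set us \<subseteq> carrier_vec m" "orthonormal us"
  shows "orth_projector m (transpose_mat (mat_of_rows m us) * mat_of_rows m us)"
proof -
  let ?U = "mat_of_rows m us"
  have "transpose_mat ?U * ?U * (transpose_mat ?U * ?U) = transpose_mat ?U * (?U * transpose_mat ?U) * ?U"
    by (simp add: assoc_mult_mat_dim)
  also have "\<dots> = transpose_mat ?U * ?U"
    using orthonormal_mult_transpose[OF assms] by simp
  finally show ?thesis by (simp add: orth_projector_def transpose_mult_dim carrier_matI)
qed

lemma orthonormal_snoc:
  assumes us: "set us \<subseteq> carrier_vec m" "orthonormal us" and q: "q \<in> carrier_vec m" "q \<bullet> q = 1"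
    and orth: "mat_of_rows m us *\<^sub>v q = 0\<^sub>v (length us)"
  shows "orthonormal (us @ [q])"
proof -
  have uq: "us ! i \<bullet> q = 0" if "i < length us" for i
    using that arg_cong[OF orth, of "\<lambda>w. w $ i"] us by (simp add: subsetD)
  have "q \<bullet> us ! i = 0" if "i < length us" for i
    using uq[OF that] comm_scalar_prod[of q m "us ! i"] q us that by (auto simp: subsetD)
  with uq us q show ?thesis
    unfolding orthonormal_def by (auto simp: nth_append not_less less_Suc_eq)
qed

(* The last two conditions say that span xs is contained in span us and, via orthogonal
   complements, that span us is contained in span xs. *)
definition orthonormal_basis :: "nat \<Rightarrow> real vec list \<Rightarrow> real vec list \<Rightarrow> bool" where
  "orthonormal_basis m xs us \<longleftrightarrow> set us \<subseteq> carrier_vec m \<and> orthonormal us \<and>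
     (\<forall>z\<in>set xs. (transpose_mat (mat_of_rows m us) * mat_of_rows m us) *\<^sub>v z = z) \<and>
     (\<forall>v\<in>carrier_vec m. (\<forall>z\<in>set xs. z \<bullet> v = 0) \<longrightarrow> mat_of_rows m us *\<^sub>v v = 0\<^sub>v (length us))"

lemma orthonormal_basis_snoc_in_span:
  assumes "orthonormal_basis m xs us" "(transpose_mat (mat_of_rows m us) * mat_of_rows m us) *\<^sub>v x = x"
  shows "orthonormal_basis m (xs @ [x]) us"
  using assms by (auto simp: orthonormal_basis_def)

lemma orthonormal_basis_snoc_unit:
  assumes B: "orthonormal_basis m xs us"
    and q: "q \<in> carrier_vec m" "q \<bullet> q = 1" "mat_of_rows m us *\<^sub>v q = 0\<^sub>v (length us)"
    and x: "(transpose_mat (mat_of_rows m (us @ [q])) * mat_of_rows m (us @ [q])) *\<^sub>v x = x"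
    and ker: "\<And>v. v \<in> carrier_vec m \<Longrightarrow> \<forall>z\<in>set (xs @ [x]). z \<bullet> v = 0 \<Longrightarrow> q \<bullet> v = 0"
  shows "orthonormal_basis m (xs @ [x]) (us @ [q])"
proof -
  define U where "U = mat_of_rows m us"
  have us: "set us \<subseteq> carrier_vec m" "orthonormal us"
    and rep: "\<And>z. z \<in> set xs \<Longrightarrow> (transpose_mat U * U) *\<^sub>v z = z"
    and ker_us: "\<And>v. v \<in> carrier_vec m \<Longrightarrow> \<forall>z\<in>set xs. z \<bullet> v = 0 \<Longrightarrow> U *\<^sub>v v = 0\<^sub>v (length us)"
    using B by (auto simp: orthonormal_basis_def U_def)
  have U: "U \<in> carrier_mat (length us) m" unfolding U_def by simp
  have "(transpose_mat (mat_of_rows m (us @ [q])) * mat_of_rows m (us @ [q])) *\<^sub>v z = z"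
    if z: "z \<in> set xs" for z
  proof -
    have "dim_vec z = dim_col U" by (subst rep[OF z, symmetric]) simp
    then have zc: "z \<in> carrier_vec m" using U by (auto intro: carrier_vecI)
    then have rep_z: "transpose_mat U *\<^sub>v (U *\<^sub>v z) = z" using rep[OF z] U by (simp add: assoc_mult_mat_vec[of _ m "length us" U m])
    have "q \<bullet> z = (U *\<^sub>v q) \<bullet> (U *\<^sub>v z)"
      using scalar_prod_transpose_mult_vec[OF U q(1), of "U *\<^sub>v z"] rep_z U zc by simp
    then have "q \<bullet> z = 0" using q(3) U zc unfolding U_def by simp
    then show ?thesis
      using gram_mat_of_rows_snoc_mult_vec[OF us(1) q(1) zc] rep[OF z] zc q(1)
      unfolding U_def by auto
  qed
  moreover have "mat_of_rows m (us @ [q]) *\<^sub>v v = 0\<^sub>v (length (us @ [q]))"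
    if "v \<in> carrier_vec m" "\<forall>z\<in>set (xs @ [x]). z \<bullet> v = 0" for v
    using ker[OF that] ker_us[of v] that unfolding U_def
    by (intro eq_vecI) (auto simp: mat_of_rows_snoc_mult_vec)
  ultimately show ?thesis
    using x us q orthonormal_snoc[OF us q] unfolding orthonormal_basis_def by auto
qed

lemma orthonormal_basis_snoc_residual:
  assumes B: "orthonormal_basis m xs us" and x: "x \<in> carrier_vec m"
  defines "p \<equiv> x - (transpose_mat (mat_of_rows m us) * mat_of_rows m us) *\<^sub>v x"
  assumes p0: "p \<noteq> 0\<^sub>v m"
  shows "orthonormal_basis m (xs @ [x]) (us @ [(1 / sqrt (p \<bullet> p)) \<cdot>\<^sub>v p])"
proof -
  define U where "U = mat_of_rows m us"
  define P where "P = transpose_mat U * U"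
  define q where "q = (1 / sqrt (p \<bullet> p)) \<cdot>\<^sub>v p"
  have us: "set us \<subseteq> carrier_vec m" "orthonormal us"
    and ker: "\<And>v. v \<in> carrier_vec m \<Longrightarrow> \<forall>z\<in>set xs. z \<bullet> v = 0 \<Longrightarrow> U *\<^sub>v v = 0\<^sub>v (length us)"
    using B by (auto simp: orthonormal_basis_def U_def)
  have P: "orth_projector m P" unfolding P_def U_def by (rule orthonormal_orth_projector[OF us])
  have U: "U \<in> carrier_mat (length us) m" and PU: "P \<in> carrier_mat m m" and p: "p \<in> carrier_vec m"
    unfolding U_def P_def p_def using x by (auto intro: carrier_vecI)
  have p_def': "p = x - P *\<^sub>v x" unfolding p_def P_def U_def ..
  have pos: "p \<bullet> p > 0"
    using scalar_prod_self_eq_0_iff[OF p] p0 conjugate_square_ge_0_vec[of p] by (simp add: order_le_less)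
  have q: "q \<in> carrier_vec m" "q \<bullet> q = 1"
    unfolding q_def using p pos by (auto simp: field_simps)
  have "U * P = U"
    using orthonormal_mult_transpose[OF us] U unfolding P_def U_def by (simp add: assoc_mult_mat_dim[symmetric])
  then have "U *\<^sub>v p = 0\<^sub>v (length us)" using orth_projector_residual_mult[OF P x U] by (simp add: p_def')
  then have Uq: "U *\<^sub>v q = 0\<^sub>v (length us)" unfolding q_def using U p by (auto simp: mult_mat_vec)
  have "x \<bullet> p = p \<bullet> p" using orth_projector_residual_scalar_prod[OF P x] by (simp add: p_def')
  then have "q \<bullet> x = (1 / sqrt (p \<bullet> p)) * (p \<bullet> p)"
    unfolding q_def using p x by (subst comm_scalar_prod[OF _ x]) auto
  then have "(q \<bullet> x) \<cdot>\<^sub>v q = p"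
    unfolding q_def using pos by (simp add: smult_smult_assoc real_sqrt_mult[symmetric])
  then have "(transpose_mat (mat_of_rows m (us @ [q])) * mat_of_rows m (us @ [q])) *\<^sub>v x = x"
    using gram_mat_of_rows_snoc_mult_vec[OF us(1) q(1) x] x PU
    unfolding P_def U_def p_def' by (auto intro!: eq_vecI)
  moreover have "q \<bullet> v = 0" if v: "v \<in> carrier_vec m" and orth: "\<forall>z\<in>set (xs @ [x]). z \<bullet> v = 0" for v
  proof -
    have "(P *\<^sub>v x) \<bullet> v = x \<bullet> (P *\<^sub>v v)"
      using scalar_prod_transpose_mult_vec[OF PU x v] P by (simp add: orth_projector_def)
    also have "P *\<^sub>v v = 0\<^sub>v m" using ker[OF v] orth U v unfolding P_def by (auto simp: assoc_mult_mat_vec_dim)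
    finally have "(P *\<^sub>v x) \<bullet> v = 0" using x by simp
    moreover have "x \<bullet> v = 0" using orth by simp
    ultimately have "p \<bullet> v = 0"
      using x v PU unfolding p_def' by (subst minus_scalar_prod_distrib[of _ m]) auto
    then show ?thesis unfolding q_def using p v by simp
  qed
  ultimately show ?thesis
    using orthonormal_basis_snoc_unit[OF B q Uq[unfolded U_def]] unfolding q_def by blast
qed

lemma orthonormal_basis_exists:
  assumes "set xs \<subseteq> carrier_vec m"
  shows "\<exists>us. orthonormal_basis m xs us"
  using assms
proof (induction xs rule: rev_induct)
  case Nil
  show ?case by (rule exI[of _ "[]"]) (auto simp: orthonormal_basis_def orthonormal_def)
next
  case (snoc x xs)
  then obtain us where B: "orthonormal_basis m xs us" and x: "x \<in> carrier_vec m" by auto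
  let ?Px = "(transpose_mat (mat_of_rows m us) * mat_of_rows m us) *\<^sub>v x"
  show ?case
  proof (cases "x - ?Px = 0\<^sub>v m")
    case True
    have "?Px = x"
    proof (rule eq_vecI)
      fix i assume "i < dim_vec x"
      then show "?Px $ i = x $ i" using arg_cong[OF True, of "\<lambda>v. v $ i"] x by simp
    qed (use x in simp)
    then show ?thesis using orthonormal_basis_snoc_in_span[OF B] by blast
  next
    case False
    then show ?thesis using orthonormal_basis_snoc_residual[OF B x] by blast
  qed
qed

lemma orthonormal_basis_factor:
  assumes B: "orthonormal_basis m xs us" and xs: "set xs \<subseteq> carrier_vec m"
  shows "mat_of_rows m xs * transpose_mat (mat_of_rows m us) * mat_of_rows m us = mat_of_rows m xs"
proof -
  let ?A = "mat_of_rows m xs" and ?U = "mat_of_rows m us"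
  have "transpose_mat ?U * ?U * transpose_mat ?A = transpose_mat ?A"
  proof (rule mat_col_eqI)
    fix j assume "j < dim_col (transpose_mat ?A)"
    then have j: "j < length xs" by simp
    then have "col (transpose_mat ?U * ?U * transpose_mat ?A) j = (transpose_mat ?U * ?U) *\<^sub>v xs ! j"
      using xs by (subst col_mult2[of _ m m _ "length xs"]) (auto simp: subsetD)
    also have "\<dots> = xs ! j" using B j by (simp add: orthonormal_basis_def)
    finally show "col (transpose_mat ?U * ?U * transpose_mat ?A) j = col (transpose_mat ?A) j"
      using j xs by (simp add: subsetD)
  qed auto
  then have "transpose_mat (transpose_mat ?U * ?U * transpose_mat ?A) = ?A" by simp
  then show ?thesis by (simp add: transpose_mult_dim assoc_mult_mat_dim)
qed

definition is_pinv :: "'a::comm_ring_1 mat \<Rightarrow> 'a mat \<Rightarrow> bool" where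
  "is_pinv A B \<longleftrightarrow> B \<in> carrier_mat (dim_col A) (dim_row A) \<and>
      A * B * A = A \<and> B * A * B = B \<and>
      transpose_mat (A * B) = A * B \<and> transpose_mat (B * A) = B * A"

lemma is_pinv_unique:
  assumes A: "A \<in> carrier_mat n m" and B: "is_pinv A B" and C: "is_pinv A C"
  shows "B = C"
proof -
  have "B \<in> carrier_mat m n" "C \<in> carrier_mat m n" using A B C unfolding is_pinv_def by auto
  note d = carrier_matD[OF A] carrier_matD[OF this(1)] carrier_matD[OF this(2)]
  have ABA: "A * (B * A) = A" and BAB: "B * (A * B) = B"
    and tAB: "transpose_mat B * transpose_mat A = A * B" and tBA: "transpose_mat A * transpose_mat B = B * A"
    using B d unfolding is_pinv_def by (auto simp: assoc_mult_mat_dim transpose_mult_dim)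
  have ACA: "A * (C * A) = A" and CAC: "C * (A * C) = C"
    and tAC: "transpose_mat C * transpose_mat A = A * C" and tCA: "transpose_mat A * transpose_mat C = C * A"
    using C d unfolding is_pinv_def by (auto simp: assoc_mult_mat_dim transpose_mult_dim)
  have AtAC: "transpose_mat A * (A * C) = transpose_mat A"
    using arg_cong[OF ACA, of transpose_mat] d tAC by (simp add: transpose_mult_dim assoc_mult_mat_dim)
  have "B * (A * transpose_mat A) = transpose_mat A"
    using arg_cong[OF ABA, of transpose_mat] d tBA by (simp add: transpose_mult_dim assoc_mult_mat_dim[symmetric])
  then have BAAt: "B * (A * (transpose_mat A * X)) = transpose_mat A * X" if "dim_row X = n" for X
    using d that by (simp add: assoc_mult_mat_dim[symmetric])
  have "B = B * (transpose_mat B * transpose_mat A)" using BAB tAB by simp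
  also have "\<dots> = B * (transpose_mat B * transpose_mat A) * (A * C)"
    using AtAC d by (simp add: assoc_mult_mat_dim)
  also have "\<dots> = B * (A * C)" using BAB tAB d by (simp add: assoc_mult_mat_dim)
  finally have B_eq: "B = B * (A * C)" .
  have "C = (transpose_mat A * transpose_mat C) * C" using CAC tCA d by (simp add: assoc_mult_mat_dim)
  also have "\<dots> = B * (A * (transpose_mat A * transpose_mat C)) * C"
    using BAAt d by (simp add: assoc_mult_mat_dim)
  also have "\<dots> = B * (A * C)" using tCA CAC d by (simp add: assoc_mult_mat_dim)
  finally show ?thesis using B_eq by simp
qed

lemma is_pinv_factor:
  fixes G U :: "'a::comm_ring_1 mat"
  assumes G: "G \<in> carrier_mat n r" and U: "U \<in> carrier_mat r m" and Gi: "Gi \<in> carrier_mat r r"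
    and UUt: "U * transpose_mat U = 1\<^sub>m r"
    and GiG: "Gi * (transpose_mat G * G) = 1\<^sub>m r" and sym: "transpose_mat Gi = Gi"
  shows "is_pinv (G * U) (transpose_mat U * Gi * transpose_mat G)"
proof -
  note d = carrier_matD[OF G] carrier_matD[OF U] carrier_matD[OF Gi]
  have cancel_U: "U * (transpose_mat U * X) = X" if "dim_row X = r" for X
    using UUt that d by (simp add: assoc_mult_mat_dim[symmetric])
  have cancel_G: "Gi * (transpose_mat G * (G * X)) = X" if "dim_row X = r" for X
    using GiG that d by (simp add: assoc_mult_mat_dim[symmetric])
  have AB: "G * U * (transpose_mat U * Gi * transpose_mat G) = G * (Gi * transpose_mat G)"
    using d cancel_U by (simp add: assoc_mult_mat_dim)
  have BA: "transpose_mat U * Gi * transpose_mat G * (G * U) = transpose_mat U * U"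
    using d cancel_G by (simp add: assoc_mult_mat_dim)
  show ?thesis
    unfolding is_pinv_def
  proof (intro conjI)
    show "G * U * (transpose_mat U * Gi * transpose_mat G) * (G * U) = G * U"
      using d cancel_G cancel_U by (simp add: AB assoc_mult_mat_dim)
    show "transpose_mat U * Gi * transpose_mat G * (G * U) * (transpose_mat U * Gi * transpose_mat G)
      = transpose_mat U * Gi * transpose_mat G"
      using d cancel_U cancel_G by (simp add: BA assoc_mult_mat_dim)
    show "transpose_mat (G * U * (transpose_mat U * Gi * transpose_mat G))
      = G * U * (transpose_mat U * Gi * transpose_mat G)"
      unfolding AB using d sym by (simp add: transpose_mult_dim assoc_mult_mat_dim)
    show "transpose_mat (transpose_mat U * Gi * transpose_mat G * (G * U))
      = transpose_mat U * Gi * transpose_mat G * (G * U)"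
      unfolding BA using d by (simp add: transpose_mult_dim)
  qed (use d in auto)
qed

lemma gram_mat_inverse_exists:
  fixes G :: "real mat"
  assumes G: "G \<in> carrier_mat n r" and inj: "\<And>a. a \<in> carrier_vec r \<Longrightarrow> G *\<^sub>v a = 0\<^sub>v n \<Longrightarrow> a = 0\<^sub>v r"
  obtains Gi where "Gi \<in> carrier_mat r r" "Gi * (transpose_mat G * G) = 1\<^sub>m r" "transpose_mat Gi = Gi"
proof -
  define Gr where "Gr = transpose_mat G * G"
  have Gr: "Gr \<in> carrier_mat r r" unfolding Gr_def using G by simp
  have "det Gr \<noteq> 0"
  proof
    assume "det Gr = 0"
    then obtain a where a: "a \<in> carrier_vec r" "a \<noteq> 0\<^sub>v r" and Gra: "Gr *\<^sub>v a = 0\<^sub>v r"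
      using det_0_iff_vec_prod_zero[OF Gr] by blast
    have "(G *\<^sub>v a) \<bullet> (G *\<^sub>v a) = a \<bullet> (Gr *\<^sub>v a)"
      using scalar_prod_transpose_mult_vec[OF G a(1), of "G *\<^sub>v a"] G a unfolding Gr_def by simp
    then have "G *\<^sub>v a = 0\<^sub>v n" using Gra a G by (simp add: scalar_prod_self_eq_0_iff[of _ n])
    then show False using inj a by blast
  qed
  then obtain Gi where Gi: "Gi \<in> carrier_mat r r" and GiGr: "Gi * Gr = 1\<^sub>m r" and GrGi: "Gr * Gi = 1\<^sub>m r"
    using det_non_zero_imp_unit[OF Gr, of "()"] unfolding Units_def ring_mat_def by auto
  have GitGr: "transpose_mat Gi * Gr = 1\<^sub>m r"
    using arg_cong[OF GrGi, of transpose_mat] Gi Gr G unfolding Gr_def by (simp add: transpose_mult_dim)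
  have "transpose_mat Gi = transpose_mat Gi * (Gr * Gi)" using GrGi Gi by simp
  also have "\<dots> = Gi" using GitGr Gi Gr by (simp add: assoc_mult_mat_dim[symmetric])
  finally have "transpose_mat Gi = Gi" .
  then show ?thesis using that Gi GiGr unfolding Gr_def by blast
qed

lemma orthonormal_basis_transpose_inj:
  assumes basis: "orthonormal_basis m xs us" and xs: "set xs \<subseteq> carrier_vec m"
    and a: "a \<in> carrier_vec (length us)"
    and Aa: "mat_of_rows m xs *\<^sub>v (transpose_mat (mat_of_rows m us) *\<^sub>v a) = 0\<^sub>v (length xs)"
  shows "a = 0\<^sub>v (length us)"
proof -
  define U where "U = mat_of_rows m us"
  have U: "U \<in> carrier_mat (length us) m" unfolding U_def by simp
  have "\<forall>z\<in>set xs. z \<bullet> (transpose_mat U *\<^sub>v a) = 0"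
  proof
    fix z assume "z \<in> set xs"
    then obtain i where i: "i < length xs" "z = xs ! i" by (auto simp: in_set_conv_nth)
    then have "(mat_of_rows m xs *\<^sub>v (transpose_mat U *\<^sub>v a)) $ i = z \<bullet> (transpose_mat U *\<^sub>v a)"
      using xs by (simp add: subsetD)
    then show "z \<bullet> (transpose_mat U *\<^sub>v a) = 0" using Aa i unfolding U_def by simp
  qed
  moreover have "transpose_mat U *\<^sub>v a \<in> carrier_vec m" using U a by simp
  ultimately have "U *\<^sub>v (transpose_mat U *\<^sub>v a) = 0\<^sub>v (length us)"
    using basis unfolding orthonormal_basis_def U_def by blast
  moreover have "U *\<^sub>v (transpose_mat U *\<^sub>v a) = (U * transpose_mat U) *\<^sub>v a"
    by (rule assoc_mult_mat_vec[symmetric]) (use U a in auto)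
  moreover have "U * transpose_mat U = 1\<^sub>m (length us)"
    using orthonormal_mult_transpose basis unfolding orthonormal_basis_def U_def by blast
  ultimately show ?thesis using a by simp
qed

lemma is_pinv_exists:
  fixes A :: "real mat"
  shows "\<exists>B. is_pinv A B"
proof -
  define m where "m = dim_col A"
  define xs where "xs = rows A"
  have A: "A = mat_of_rows m xs" and xs: "set xs \<subseteq> carrier_vec m" unfolding m_def xs_def by auto
  obtain us where basis: "orthonormal_basis m xs us" using orthonormal_basis_exists[OF xs] by blast
  define U where "U = mat_of_rows m us"
  define G where "G = A * transpose_mat U"
  have U: "U \<in> carrier_mat (length us) m" and G: "G \<in> carrier_mat (length xs) (length us)"
    unfolding U_def G_def A by auto
  have "a = 0\<^sub>v (length us)" if a: "a \<in> carrier_vec (length us)" and Ga: "G *\<^sub>v a = 0\<^sub>v (length xs)" for a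
  proof (rule orthonormal_basis_transpose_inj[OF basis xs a])
    have "G *\<^sub>v a = A *\<^sub>v (transpose_mat U *\<^sub>v a)"
      unfolding G_def by (rule assoc_mult_mat_vec) (use U a in \<open>auto simp: A\<close>)
    then show "mat_of_rows m xs *\<^sub>v (transpose_mat (mat_of_rows m us) *\<^sub>v a) = 0\<^sub>v (length xs)"
      using Ga unfolding A U_def by simp
  qed
  then obtain Gi where "Gi \<in> carrier_mat (length us) (length us)"
    "Gi * (transpose_mat G * G) = 1\<^sub>m (length us)" "transpose_mat Gi = Gi"
    using gram_mat_inverse_exists[OF G] by blast
  moreover have "A = G * U"
    using orthonormal_basis_factor[OF basis xs] U unfolding G_def U_def A by (simp add: assoc_mult_mat_dim)
  ultimately show ?thesis
    using is_pinv_factor[OF G U] orthonormal_mult_transpose[of us m] basis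
    unfolding orthonormal_basis_def U_def by auto
qed

lemma pinv_is_pinv: "is_pinv A (pinv A)"
proof -
  have "\<exists>!B. is_pinv A B"
    using is_pinv_exists is_pinv_unique[of A "dim_row A" "dim_col A"] by (auto intro: carrier_matI)
  then show ?thesis unfolding pinv_def is_pinv_def[symmetric] by (rule theI')
qed

context
  fixes A B :: "real mat" and n m :: nat
  assumes A: "A \<in> carrier_mat n m" and B: "is_pinv A B"
begin

lemma is_pinv_carrier: "B \<in> carrier_mat m n"
  using A B by (simp add: is_pinv_def)

lemma is_pinv_orth_projector: "orth_projector m (B * A)"
proof -
  have "B * A * (B * A) = B * A * B * A"
    using A is_pinv_carrier by (simp add: assoc_mult_mat_dim)
  then show ?thesis using A B is_pinv_carrier by (simp add: is_pinv_def orth_projector_def)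
qed

lemma is_pinv_orth_projector_mult_vec:
  assumes "v \<in> carrier_vec n"
  shows "(B * A) *\<^sub>v (B *\<^sub>v v) = B *\<^sub>v v"
  using B A is_pinv_carrier assms by (simp add: is_pinv_def assoc_mult_mat_vec_dim[symmetric])

lemma is_pinv_normal_equation:
  assumes b: "b \<in> carrier_vec n"
  shows "(transpose_mat A * A) *\<^sub>v (B *\<^sub>v b) = transpose_mat A *\<^sub>v b"
proof -
  note d = carrier_matD[OF A] carrier_matD[OF is_pinv_carrier]
  have "transpose_mat A * A * B = transpose_mat A * transpose_mat (A * B)"
    using B d by (simp add: is_pinv_def assoc_mult_mat_dim)
  also have "\<dots> = transpose_mat (A * B * A)" using d by (simp add: transpose_mult_dim assoc_mult_mat_dim)
  finally have "transpose_mat A * A * B = transpose_mat A" using B by (simp add: is_pinv_def)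
  then show ?thesis using b d by (simp add: assoc_mult_mat_vec_dim[symmetric])
qed

lemma is_pinv_range: "B = transpose_mat A * (transpose_mat B * B)"
proof -
  note d = carrier_matD[OF A] carrier_matD[OF is_pinv_carrier]
  have "B = transpose_mat (B * A) * B" using B by (simp add: is_pinv_def)
  then show ?thesis using d by (simp add: transpose_mult_dim assoc_mult_mat_dim)
qed

lemma is_pinv_mult_vec_in_range:
  assumes "v \<in> carrier_vec n"
  obtains z where "z \<in> carrier_vec n" "B *\<^sub>v v = transpose_mat A *\<^sub>v z"
proof
  show "(transpose_mat B * B) *\<^sub>v v \<in> carrier_vec n" using is_pinv_carrier assms by simp
  show "B *\<^sub>v v = transpose_mat A *\<^sub>v ((transpose_mat B * B) *\<^sub>v v)"
    using is_pinv_carrier A assms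
    by (subst is_pinv_range) (simp add: assoc_mult_mat_vec_dim)
qed

lemma is_pinv_normal_equation_unique:
  assumes b: "b \<in> carrier_vec n" and w: "w \<in> carrier_vec n"
    and normal: "(transpose_mat A * A) *\<^sub>v (transpose_mat A *\<^sub>v w) = transpose_mat A *\<^sub>v b"
  shows "B *\<^sub>v b = transpose_mat A *\<^sub>v w"
proof -
  note d = carrier_matD[OF A] carrier_matD[OF is_pinv_carrier]
  have BBtAt: "B * transpose_mat B * transpose_mat A = B"
    using B d by (simp add: is_pinv_def assoc_mult_mat_dim transpose_mult_dim[symmetric])
  have "B * A * transpose_mat A = transpose_mat (B * A) * transpose_mat A" using B by (simp add: is_pinv_def)
  also have "\<dots> = transpose_mat (A * B * A)" using d by (simp add: transpose_mult_dim assoc_mult_mat_dim)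
  finally have BAAt: "B * A * transpose_mat A = transpose_mat A" using B by (simp add: is_pinv_def)
  note dv = carrier_vecD[OF b] carrier_vecD[OF w]
  have "B *\<^sub>v b = (B * transpose_mat B) *\<^sub>v ((transpose_mat A * A) *\<^sub>v (transpose_mat A *\<^sub>v w))"
    using BBtAt d dv by (simp add: normal assoc_mult_mat_vec_dim[symmetric])
  also have "\<dots> = (B * transpose_mat B * transpose_mat A * A * transpose_mat A) *\<^sub>v w"
    using d dv by (simp add: assoc_mult_mat_vec_dim assoc_mult_mat_dim)
  also have "\<dots> = transpose_mat A *\<^sub>v w"
    using d BBtAt BAAt by simp
  finally show ?thesis .
qed

end

lemma pinv_snoc_mult_vec:
  fixes xs :: "real vec list" and bs :: "real list"
  assumes xs: "set xs \<subseteq> carrier_vec m" and x: "x \<in> carrier_vec m" and bs: "length bs = length xs"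
  defines "A \<equiv> mat_of_rows m xs"
  defines "\<theta> \<equiv> pinv A *\<^sub>v vec_of_list bs" and "p \<equiv> x - (pinv A * A) *\<^sub>v x"
  assumes nz: "x \<bullet> p \<noteq> 0"
  shows "pinv (mat_of_rows m (xs @ [x])) *\<^sub>v vec_of_list (bs @ [\<beta>]) = \<theta> + ((\<beta> - x \<bullet> \<theta>) / (x \<bullet> p)) \<cdot>\<^sub>v p"
proof -
  define n where "n = length xs"
  define t where "t = (\<beta> - x \<bullet> \<theta>) / (x \<bullet> p)"
  define A' where "A' = mat_of_rows m (xs @ [x])"
  have A: "A \<in> carrier_mat n m" and A': "A' \<in> carrier_mat (Suc n) m"
    unfolding A_def A'_def n_def by auto
  have B: "is_pinv A (pinv A)" and B': "is_pinv A' (pinv A')" by (rule pinv_is_pinv)+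
  note Bc = is_pinv_carrier[OF A B]
  have b: "vec_of_list bs \<in> carrier_vec n" using bs unfolding n_def by (auto intro: carrier_vecI)
  have \<theta>: "\<theta> \<in> carrier_vec m" and p: "p \<in> carrier_vec m"
    unfolding \<theta>_def p_def using Bc A b x by auto
  obtain z1 where z1: "z1 \<in> carrier_vec n" "\<theta> = transpose_mat A *\<^sub>v z1"
    using is_pinv_mult_vec_in_range[OF A B b] unfolding \<theta>_def by blast
  obtain z2 where z2: "z2 \<in> carrier_vec n" "(pinv A * A) *\<^sub>v x = transpose_mat A *\<^sub>v z2"
    using is_pinv_mult_vec_in_range[OF A B, of "A *\<^sub>v x"] A Bc x by (auto simp: assoc_mult_mat_vec_dim)
  define w where "w = (z1 - t \<cdot>\<^sub>v z2) @\<^sub>v vec_of_list [t]"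
  have w: "w \<in> carrier_vec (Suc n)" unfolding w_def using z1 z2 by (auto intro: carrier_vecI)
  have "transpose_mat A' *\<^sub>v w = transpose_mat A *\<^sub>v (z1 - t \<cdot>\<^sub>v z2) + t \<cdot>\<^sub>v x"
    unfolding A'_def A_def w_def
    by (rule transpose_mat_of_rows_snoc_mult_vec) (use xs x z1 z2 in \<open>auto simp: n_def\<close>)
  also have "transpose_mat A *\<^sub>v (z1 - t \<cdot>\<^sub>v z2) = \<theta> - t \<cdot>\<^sub>v ((pinv A * A) *\<^sub>v x)"
    using A z1 z2 by (simp add: mult_minus_distrib_mat_vec[of _ m n] mult_mat_vec[of _ m n])
  finally have range: "transpose_mat A' *\<^sub>v w = \<theta> + t \<cdot>\<^sub>v p"
    using \<theta> x A Bc unfolding p_def by (auto simp: algebra_simps intro!: eq_vecI)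
  have P: "orth_projector m (pinv A * A)" by (rule is_pinv_orth_projector[OF A B])
  have "A * (pinv A * A) = A" using B A Bc by (simp add: is_pinv_def assoc_mult_mat_dim)
  then have "A *\<^sub>v p = 0\<^sub>v n" using orth_projector_residual_mult[OF P x A] by (simp add: p_def)
  then have "(transpose_mat A * A) *\<^sub>v p = 0\<^sub>v m" using A p by (auto simp: assoc_mult_mat_vec_dim)
  then have "(transpose_mat A * A) *\<^sub>v (\<theta> + t \<cdot>\<^sub>v p) = transpose_mat A *\<^sub>v vec_of_list bs"
    using is_pinv_normal_equation[OF A B b] A b \<theta> p
    unfolding \<theta>_def by (auto simp: mult_add_distrib_mat_vec[of _ m m] mult_mat_vec[of _ m m])
  moreover have "x \<bullet> (\<theta> + t \<cdot>\<^sub>v p) = \<beta>"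
    using x \<theta> p nz unfolding t_def by (simp add: scalar_prod_add_distrib[of _ m])
  ultimately have normal: "(transpose_mat A' * A') *\<^sub>v (\<theta> + t \<cdot>\<^sub>v p) = transpose_mat A' *\<^sub>v vec_of_list (bs @ [\<beta>])"
    using gram_mat_of_rows_snoc_mult_vec[OF xs x, of "\<theta> + t \<cdot>\<^sub>v p"] \<theta> p
      transpose_mat_of_rows_snoc_mult_vec[OF xs x b[unfolded n_def], of \<beta>]
    unfolding A'_def A_def vec_of_list_snoc by simp
  have "pinv A' *\<^sub>v vec_of_list (bs @ [\<beta>]) = transpose_mat A' *\<^sub>v w"
    using bs normal range
    by (intro is_pinv_normal_equation_unique[OF A' B' _ w]) (auto simp: n_def intro: carrier_vecI)
  then show ?thesis using range unfolding A'_def t_def by simp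
qed

lemma sqnorm_add_smult_orth:
  assumes u: "u \<in> carrier_vec n" and v: "v \<in> carrier_vec n" and orth: "u \<bullet> v = 0"
  shows "sqnorm (u + t \<cdot>\<^sub>v v) = sqnorm u + t\<^sup>2 * sqnorm v"
proof -
  have "v \<bullet> u = 0" using orth comm_scalar_prod[OF u v] by simp
  then show ?thesis
    using u v orth unfolding sqnorm_def
    by (simp add: scalar_prod_add_distrib[of _ n] add_scalar_prod_distrib[of _ n] power2_eq_square)
qed

theorem theorem3:
  fixes M N :: nat and xs :: "real vec list" and ys :: "real list"
    and x :: "real vec" and y :: real
  assumes len_xs: "length xs = N" and len_ys: "length ys = N"
    and xs_dim: "\<forall>v \<in> set xs. v \<in> carrier_vec M"
    and x_dim: "x \<in> carrier_vec M"
    and perp_nz: "scalar_prod x ((1\<^sub>m M - pinv (mat_of_rows M xs) * mat_of_rows M xs) *\<^sub>v x) \<noteq> 0"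
  shows "sqnorm (pinv (mat_of_rows M (xs @ [x])) *\<^sub>v vec_of_list (ys @ [y]))
       = sqnorm (pinv (mat_of_rows M xs) *\<^sub>v vec_of_list ys)
         + (y - scalar_prod x (pinv (mat_of_rows M xs) *\<^sub>v vec_of_list ys)) ^ 2
           / scalar_prod x ((1\<^sub>m M - pinv (mat_of_rows M xs) * mat_of_rows M xs) *\<^sub>v x)"
proof -
  let ?A = "mat_of_rows M xs"
  let ?\<theta> = "pinv ?A *\<^sub>v vec_of_list ys"
  define p where "p = x - (pinv ?A * ?A) *\<^sub>v x"
  have A: "?A \<in> carrier_mat N M" using len_xs by auto
  have xs: "set xs \<subseteq> carrier_vec M" using xs_dim by auto
  have ys: "vec_of_list ys \<in> carrier_vec N" using len_ys by (auto intro: carrier_vecI)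
  note B = pinv_is_pinv[of ?A]
  note P = is_pinv_orth_projector[OF A B]
  have p: "p \<in> carrier_vec M" and \<theta>: "?\<theta> \<in> carrier_vec M"
    unfolding p_def using is_pinv_carrier[OF A B] x_dim ys by (auto intro: carrier_vecI)
  have "(1\<^sub>m M - pinv ?A * ?A) *\<^sub>v x = p"
    unfolding p_def using is_pinv_carrier[OF A B] A x_dim by (subst minus_mult_distrib_mat_vec[of _ M M]) auto
  moreover have "x \<bullet> p = p \<bullet> p"
    using orth_projector_residual_scalar_prod[OF P x_dim] unfolding p_def .
  moreover have "?\<theta> \<bullet> p = 0"
    using orth_projector_residual_orth[OF P x_dim \<theta>] is_pinv_orth_projector_mult_vec[OF A B ys]
    unfolding p_def by simp
  ultimately show ?thesis
    using pinv_snoc_mult_vec[OF xs x_dim, of ys y] len_xs len_ys perp_nz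
      sqnorm_add_smult_orth[OF \<theta> p] unfolding p_def[symmetric]
    by (simp add: sqnorm_def power_divide power2_eq_square)
qed

end
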